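(* For all $R\in\mathcal{M}$, $$\sum_{\substack{H,S,T\in\mathcal{M},\ HST\in\mathcal{S}_{\mathcal{M}}(X)\\ (S,T)=1,\ (HST,R)=1\\ \deg HS,\ \deg HT\le\frac{1}{10}\deg R}}\frac{\alpha_{-1}(HS)\alpha_{-1}(HT)}{|HST|}\deg ST \ll X^4$$ as $X\to\infty$.
   Context: $q$ prime power, $\mathcal{M}$ the monic polynomials of $\mathbb{F}_q[T]$, $P$ denotes a monic irreducible, $|A|=q^{\deg A}$, $X$ a positive integer, $\mathcal{S}_{\mathcal{M}}(X)=\{A\in\mathcal{M}: P\mid A\Rightarrow\deg P\le X\}$. The function $\alpha_{-1}$ is multiplicative with: $\alpha_{-1}(P)=-1$ if $\deg P\le X$ and $0$ if $\deg P>X$; $\alpha_{-1}(P^2)=\frac12$ if $\frac X2<\deg P\le X$ and $0$ otherwise; $\alpha_{-1}(P^3)=-\frac12$ if $\frac X2<\deg P\le X$ and $0$ otherwise; $\alpha_{-1}(P^m)=0$ for $m\ge4$. *)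

theory Defs
  imports "HOL-Computational_Algebra.Polynomial" "HOL-Computational_Algebra.Factorial_Ring"
begin

definition monic :: "'a::field poly \<Rightarrow> bool" where
  "monic A \<longleftrightarrow> lead_coeff A = 1"

definition pnorm :: "'a::{field,finite} poly \<Rightarrow> real" where
  "pnorm A = real (card (UNIV::'a set)) ^ degree A"

definition smooth :: "nat \<Rightarrow> 'a::field poly \<Rightarrow> bool" where
  "smooth X A \<longleftrightarrow> monic A \<and>
     (\<forall>P. monic P \<and> irreducible P \<and> P dvd A \<longrightarrow> degree P \<le> X)"

text \<open>Value of alpha_{-1} at the prime power P^m (P monic irreducible, m \<ge> 1).\<close>
definition alpha_pp :: "nat \<Rightarrow> 'a::field poly \<Rightarrow> nat \<Rightarrow> real" where
  "alpha_pp X P m =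
     (if m = 1 then (if degree P \<le> X then -1 else 0)
      else if m = 2 then (if real X / 2 < real (degree P) \<and> degree P \<le> X then 1/2 else 0)
      else if m = 3 then (if real X / 2 < real (degree P) \<and> degree P \<le> X then -1/2 else 0)
      else 0)"

text \<open>Exponent of P in A (the largest m with P^m dividing A; A nonzero, P nonunit).\<close>
definition pmult :: "'a::field poly \<Rightarrow> 'a poly \<Rightarrow> nat" where
  "pmult P A = (GREATEST m. P ^ m dvd A)"

definition alpha_m1 :: "nat \<Rightarrow> 'a::field poly \<Rightarrow> real" where
  "alpha_m1 X A = (\<Prod>P\<in>{P. monic P \<and> irreducible P \<and> P dvd A}.
                      alpha_pp X P (pmult P A))"

end

(* Bound |alpha_{-1}| by 1 and drop the coprimality conditions: the sum is then at most the sum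
   of (deg S + deg T) / |HST| over triples of X-smooth monic polynomials of degree at most deg R,
   which factors as 2 Z^2 W, where Z and W are the sums of 1/|A| and deg A/|A| over those A.
   By unique factorisation Z is at most the truncated Euler product over the monic irreducibles P
   of degree at most X, hence at most exp (sum 1/|P| + 2 sum 1/|P|^2); the prime polynomial bound
   d pi(d) <= q^d, which follows from Gauss's formula, makes this O(X).  Writing deg A as the sum of
   deg P over the prime powers P^k dividing A gives W <= 2 X Z.  So the sum is at most
   4 X Z^3 = O(X^4). *)
theory Submission
  imports
    Defs
    "HOL-Computational_Algebra.Polynomial_Factorial"
    "HOL-Library.Cardinality"
    "HOL-Library.FuncSet"
begin

section \<open>Multiplicities and unique factorisation\<close>

lemma monic_nonzero: "monic A \<Longrightarrow> A \<noteq> 0"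
  by (auto simp: monic_def)

lemma monic_mult: "monic A \<Longrightarrow> monic B \<Longrightarrow> monic (A * B)"
  by (simp add: monic_def lead_coeff_mult)

lemma monic_power: "monic A \<Longrightarrow> monic (A ^ k)"
  by (simp add: monic_def lead_coeff_power)

lemma monic_mult_cancel_left: "monic (A * B) \<Longrightarrow> monic A \<Longrightarrow> monic B"
  by (simp add: monic_def lead_coeff_mult)

lemma monic_degree_0: "monic A \<Longrightarrow> degree A = 0 \<Longrightarrow> A = 1"
  by (auto simp: monic_def elim!: degree_eq_zeroE)

lemma irreducible_degree_pos: "irreducible (P :: 'a::field poly) \<Longrightarrow> 0 < degree P"
  using is_unit_iff_degree[of P] irreducible_not_unit[of P] by (cases "P = 0") auto

lemma monic_dvd_antisym:
  fixes P Q :: "'a::field poly"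
  assumes "monic P" "monic Q" "P dvd Q" "Q dvd P"
  shows "P = Q"
proof -
  obtain C where Q: "Q = P * C" using assms(3) ..
  have "monic C" using assms(1,2) Q monic_mult_cancel_left by blast
  have "P * C dvd P * 1" using assms(4) Q by simp
  then have "is_unit C" using monic_nonzero[OF assms(1)] by (subst (asm) dvd_times_left_cancel_iff)
  then have "degree C = 0" using monic_nonzero[OF \<open>monic C\<close>] is_unit_iff_degree by blast
  then show ?thesis using Q monic_degree_0[OF \<open>monic C\<close>] by simp
qed

lemma monic_irreducible_dvd_imp_eq:
  fixes P Q :: "'a::field poly"
  assumes "monic P" "irreducible P" "monic Q" "irreducible Q" "P dvd Q"
  shows "P = Q"
  using assms irreducibleD'[OF assms(4,5)] irreducible_not_unit monic_dvd_antisym by blast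

lemma monic_irreducible_divisor_exists:
  fixes A :: "'a::field poly"
  assumes "0 < degree A"
  shows "\<exists>P. monic P \<and> irreducible P \<and> P dvd A"
  using assms
proof (induction "degree A" arbitrary: A rule: less_induct)
  case less
  then have "A \<noteq> 0" by auto
  show ?case
  proof (cases "irreducible A")
    case True
    let ?P = "smult (inverse (lead_coeff A)) A"
    have "irreducible ([:inverse (lead_coeff A):] * A)"
      using True \<open>A \<noteq> 0\<close> by (subst irreducible_mult_unit_left) (auto intro: is_unit_triv)
    then have "irreducible ?P" by simp
    moreover have "monic ?P" using \<open>A \<noteq> 0\<close> by (simp add: monic_def)
    moreover have "?P dvd A" using \<open>A \<noteq> 0\<close> by (simp add: smult_dvd_iff)
    ultimately show ?thesis by blast
  next
    case False
    then obtain B C where A: "A = B * C" and "\<not> is_unit B" "\<not> is_unit C"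
      using \<open>A \<noteq> 0\<close> less.prems by (auto simp: irreducible_def is_unit_iff_degree)
    then have "0 < degree B" "0 < degree C"
      using \<open>A \<noteq> 0\<close> by (auto simp: is_unit_iff_degree)
    then have "degree B < degree A"
      using \<open>A \<noteq> 0\<close> by (simp add: A degree_mult_eq)
    with \<open>0 < degree B\<close> obtain P where "monic P" "irreducible P" "P dvd B"
      using less.hyps by blast
    then show ?thesis using A by auto
  qed
qed

lemma power_dvd_imp_le_degree:
  fixes P A :: "'a::field poly"
  assumes "irreducible P" "A \<noteq> 0" "P ^ m dvd A"
  shows "m \<le> degree A"
proof -
  have "P \<noteq> 0" using assms(1) by auto
  have "m \<le> m * degree P" using irreducible_degree_pos[OF assms(1)] by simp
  also have "\<dots> = degree (P ^ m)" by (simp add: degree_power_eq \<open>P \<noteq> 0\<close>)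
  also have "\<dots> \<le> degree A" using assms(3,2) by (rule dvd_imp_degree_le)
  finally show ?thesis .
qed

lemma power_dvd_iff_le_pmult:
  fixes P A :: "'a::field poly"
  assumes "irreducible P" "A \<noteq> 0"
  shows "P ^ k dvd A \<longleftrightarrow> k \<le> pmult P A"
proof
  note bounded = power_dvd_imp_le_degree[OF assms]
  show "k \<le> pmult P A" if "P ^ k dvd A"
    unfolding pmult_def using that bounded by (rule Greatest_le_nat)
  have "P ^ pmult P A dvd A"
    unfolding pmult_def by (rule GreatestI_nat[where k = 0 and b = "degree A"]) (simp_all add: bounded)
  then show "P ^ k dvd A" if "k \<le> pmult P A"
    using that by (meson le_imp_power_dvd dvd_trans)
qed

lemma pmult_le_degree:
  fixes P A :: "'a::field poly"
  assumes "irreducible P" "A \<noteq> 0"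
  shows "pmult P A \<le> degree A"
  using power_dvd_imp_le_degree[OF assms] power_dvd_iff_le_pmult[OF assms] by blast

lemma pmult_eqI:
  fixes P A :: "'a::field poly"
  assumes "irreducible P" "A \<noteq> 0" "\<And>k. P ^ k dvd A \<longleftrightarrow> k \<le> m"
  shows "pmult P A = m"
  using power_dvd_iff_le_pmult[OF assms(1,2)] assms(3) by (metis le_antisym order_refl)

lemma pmult_one: "irreducible P \<Longrightarrow> pmult P (1 :: 'a::field poly) = 0"
  using power_dvd_iff_le_pmult[of P 1 1] by (auto simp: irreducible_not_unit)

lemma pmult_mult_self:
  fixes P A :: "'a::field poly"
  assumes "irreducible P" "A \<noteq> 0"
  shows "pmult P (P * A) = Suc (pmult P A)"
proof (rule pmult_eqI)
  have "P \<noteq> 0" using assms(1) by auto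
  then show "P * A \<noteq> 0" using assms(2) by simp
  show "P ^ k dvd P * A \<longleftrightarrow> k \<le> Suc (pmult P A)" for k
  proof (cases k)
    case (Suc j)
    have "P ^ k dvd P * A \<longleftrightarrow> P ^ j dvd A" using \<open>P \<noteq> 0\<close> by (simp add: Suc)
    also have "\<dots> \<longleftrightarrow> j \<le> pmult P A" by (rule power_dvd_iff_le_pmult[OF assms])
    finally show ?thesis by (simp add: Suc)
  qed simp
qed (fact assms)

lemma irreducible_power_dvd_mult_cancel:
  fixes P Q A :: "'a::field poly"
  assumes "irreducible P" "\<not> P dvd Q"
  shows "P ^ k dvd Q * A \<longleftrightarrow> P ^ k dvd A"
proof
  show "P ^ k dvd Q * A \<Longrightarrow> P ^ k dvd A"
  proof (induction k arbitrary: A)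
    case (Suc k)
    have "P dvd Q * A" using Suc.prems by (simp add: dvd_mult_left)
    then have "P dvd A"
      using assms field_poly_irreducible_imp_prime prime_elem_dvd_mult_iff by blast
    then obtain B where A: "A = P * B" ..
    have "P ^ k dvd Q * B"
      using Suc.prems assms(1) by (auto simp: A mult.left_commute[of Q])
    then have "P ^ k dvd B" by (rule Suc.IH)
    then show ?case by (simp add: A)
  qed simp
qed simp

lemma pmult_mult_other:
  fixes P Q A :: "'a::field poly"
  assumes "monic P" "irreducible P" "monic Q" "irreducible Q" "P \<noteq> Q" "A \<noteq> 0"
  shows "pmult P (Q * A) = pmult P A"
proof (rule pmult_eqI)
  have "\<not> P dvd Q" using assms monic_irreducible_dvd_imp_eq by blast
  then show "P ^ k dvd Q * A \<longleftrightarrow> k \<le> pmult P A" for k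
    using assms(2,6) by (simp add: irreducible_power_dvd_mult_cancel power_dvd_iff_le_pmult)
  show "Q * A \<noteq> 0" using assms by auto
qed (fact assms)

lemma monic_eq_prod_pmult:
  fixes A :: "'a::field poly"
  assumes "monic A" "finite I" "\<And>P. P \<in> I \<Longrightarrow> monic P \<and> irreducible P"
    and "\<And>P. monic P \<Longrightarrow> irreducible P \<Longrightarrow> P dvd A \<Longrightarrow> P \<in> I"
  shows "A = (\<Prod>P\<in>I. P ^ pmult P A)"
  using assms(1,4)
proof (induction "degree A" arbitrary: A rule: less_induct)
  case less
  show ?case
  proof (cases "degree A = 0")
    case True
    have "A = 1" using less.prems(1) True by (rule monic_degree_0)
    then show ?thesis using assms(3) by (simp add: pmult_one)
  next
    case False
    then obtain P0 where P0: "monic P0" "irreducible P0" "P0 dvd A"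
      using monic_irreducible_divisor_exists by blast
    obtain B where A: "A = P0 * B" using P0(3) ..
    have "monic B" using less.prems(1) P0(1) A monic_mult_cancel_left by blast
    have "P0 \<in> I" using less.prems(2) P0 by blast
    have "degree B < degree A"
      using monic_nonzero[OF P0(1)] monic_nonzero[OF \<open>monic B\<close>] irreducible_degree_pos[OF P0(2)]
      by (auto simp: A degree_mult_eq)
    moreover have "P \<in> I" if "monic P" "irreducible P" "P dvd B" for P
      using less.prems(2) that A by auto
    ultimately have B: "B = (\<Prod>P\<in>I. P ^ pmult P B)"
      using less.hyps \<open>monic B\<close> by blast
    have "pmult P A = pmult P B + (if P = P0 then 1 else 0)" if "P \<in> I" for P
      using assms(3)[OF that] P0 monic_nonzero[OF \<open>monic B\<close>]
      by (auto simp: A pmult_mult_self pmult_mult_other)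
    then have "(\<Prod>P\<in>I. P ^ pmult P A) = (\<Prod>P\<in>I. P ^ pmult P B * (if P = P0 then P else 1))"
      by (intro prod.cong) auto
    also have "\<dots> = P0 * B"
      using \<open>P0 \<in> I\<close> assms(2) by (simp add: prod.distrib prod.delta flip: B)
    finally show ?thesis by (simp add: A)
  qed
qed

section \<open>Counting polynomials over a finite field\<close>

definition irreducibles_upto :: "nat \<Rightarrow> 'a::field poly set" where
  "irreducibles_upto X = {P. monic P \<and> irreducible P \<and> degree P \<le> X}"

definition smooth_upto :: "nat \<Rightarrow> nat \<Rightarrow> 'a::field poly set" where
  "smooth_upto X D = {A. smooth X A \<and> degree A \<le> D}"

definition monics_of_degree :: "nat \<Rightarrow> 'a::field poly set" where
  "monics_of_degree n = {A. monic A \<and> degree A = n}"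

definition prime_power_pairs :: "nat \<Rightarrow> ('a::field poly \<times> nat) set" where
  "prime_power_pairs n = {(P, k). monic P \<and> irreducible P \<and> 1 \<le> k \<and> k * degree P \<le> n}"

lemma monics_of_degree_Suc:
  "monics_of_degree (Suc n) = (\<lambda>(c, B). pCons c B) ` (UNIV \<times> monics_of_degree n)"
proof (intro equalityI subsetI)
  fix A :: "'a poly"
  assume "A \<in> monics_of_degree (Suc n)"
  moreover obtain c B where "A = pCons c B" by (cases A)
  ultimately show "A \<in> (\<lambda>(c, B). pCons c B) ` (UNIV \<times> monics_of_degree n)"
    by (auto simp: monics_of_degree_def monic_def split: if_splits)
qed (auto simp: monics_of_degree_def monic_def)

lemma
  shows finite_monics_of_degree: "finite (monics_of_degree n :: 'a::{field,finite} poly set)"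
    and card_monics_of_degree: "card (monics_of_degree n :: 'a poly set) = CARD('a) ^ n"
proof (induction n)
  case 0
  have "monics_of_degree 0 = {1 :: 'a poly}"
    by (auto simp: monics_of_degree_def dest: monic_degree_0) (simp add: monic_def)
  then show "finite (monics_of_degree 0 :: 'a poly set)" "card (monics_of_degree 0 :: 'a poly set) = CARD('a) ^ 0"
    by simp_all
next
  case (Suc n)
  have inj: "inj_on (\<lambda>(c, B). pCons c B) (UNIV \<times> (monics_of_degree n :: 'a poly set))"
    by (auto intro: inj_onI)
  show "finite (monics_of_degree (Suc n) :: 'a poly set)"
    using Suc.IH(1) by (simp add: monics_of_degree_Suc)
  show "card (monics_of_degree (Suc n) :: 'a poly set) = CARD('a) ^ Suc n"
    using Suc.IH by (simp add: monics_of_degree_Suc card_image[OF inj] card_cartesian_product)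
qed

lemma finite_monic_degree_le: "finite {A :: 'a::{field,finite} poly. monic A \<and> degree A \<le> n}"
proof -
  have "{A :: 'a poly. monic A \<and> degree A \<le> n} = (\<Union>m\<le>n. monics_of_degree m)"
    by (auto simp: monics_of_degree_def)
  then show ?thesis by (simp add: finite_monics_of_degree)
qed

lemma finite_irreducibles_upto: "finite (irreducibles_upto X :: 'a::{field,finite} poly set)"
  by (rule finite_subset[OF _ finite_monic_degree_le]) (auto simp: irreducibles_upto_def)

lemma finite_smooth_upto: "finite (smooth_upto X D :: 'a::{field,finite} poly set)"
  by (rule finite_subset[OF _ finite_monic_degree_le]) (auto simp: smooth_upto_def smooth_def)

lemma monic_imp_smooth: "monic A \<Longrightarrow> degree A \<le> n \<Longrightarrow> smooth n A"
  by (auto simp: smooth_def dest!: dvd_imp_degree_le[OF _ monic_nonzero])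

lemma smooth_dvd: "smooth X C \<Longrightarrow> monic A \<Longrightarrow> A dvd C \<Longrightarrow> smooth X A"
  by (auto simp: smooth_def intro: dvd_trans)

lemma smooth_eq_prod_pmult:
  fixes A :: "'a::{field,finite} poly"
  assumes "smooth X A"
  shows "A = (\<Prod>P\<in>irreducibles_upto X. P ^ pmult P A)"
  using assms by (intro monic_eq_prod_pmult finite_irreducibles_upto)
    (auto simp: smooth_def irreducibles_upto_def)

lemma degree_smooth_eq_sum_pmult:
  fixes A :: "'a::{field,finite} poly"
  assumes "smooth X A"
  shows "degree A = (\<Sum>P\<in>irreducibles_upto X. pmult P A * degree P)"
proof -
  have "degree A = degree (\<Prod>P\<in>irreducibles_upto X. P ^ pmult P A)"
    using smooth_eq_prod_pmult[OF assms] by simp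
  also have "\<dots> = (\<Sum>P\<in>irreducibles_upto X. pmult P A * degree P)"
    by (subst degree_prod_eq_sum_degree) (auto simp: irreducibles_upto_def degree_power_eq monic_nonzero)
  finally show ?thesis .
qed

lemma prime_power_pairs_subset: "prime_power_pairs n \<subseteq> irreducibles_upto n \<times> {1..n}"
proof
  fix x assume "x \<in> prime_power_pairs n"
  then obtain P k where x: "x = (P, k)" "monic P" "irreducible P" "1 \<le> k" "k * degree P \<le> n"
    by (auto simp: prime_power_pairs_def)
  have "degree P \<le> k * degree P" "k \<le> k * degree P"
    using x(4) irreducible_degree_pos[OF x(3)] by simp_all
  then show "x \<in> irreducibles_upto n \<times> {1..n}"
    using x order_trans[OF _ x(5)] by (auto simp: irreducibles_upto_def)
qed

lemma finite_prime_power_pairs: "finite (prime_power_pairs n :: ('a::{field,finite} poly \<times> nat) set)"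
  by (rule finite_subset[OF prime_power_pairs_subset]) (simp add: finite_irreducibles_upto)

lemma degree_eq_sum_prime_power_divisors:
  fixes A :: "'a::{field,finite} poly"
  assumes "smooth X A" "degree A \<le> n"
  shows "degree A = (\<Sum>(P, k)\<in>irreducibles_upto X \<times> {1..n}. if P ^ k dvd A then degree P else 0)"
proof -
  have A: "A \<noteq> 0" using assms(1) monic_nonzero by (auto simp: smooth_def)
  have irr: "irreducible P" if "P \<in> irreducibles_upto X" for P
    using that by (simp add: irreducibles_upto_def)
  have "(\<Sum>(P, k)\<in>irreducibles_upto X \<times> {1..n}. if P ^ k dvd A then degree P else 0)
      = (\<Sum>P\<in>irreducibles_upto X. \<Sum>k\<in>{1..n}. if P ^ k dvd A then degree P else 0)"
    by (simp add: sum.cartesian_product)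
  also have "\<dots> = (\<Sum>P\<in>irreducibles_upto X. pmult P A * degree P)"
  proof (rule sum.cong[OF refl])
    fix P :: "'a poly" assume P: "P \<in> irreducibles_upto X"
    then have "pmult P A \<le> n" using pmult_le_degree[OF irr A] assms(2) by (meson order_trans)
    then have "{1..n} \<inter> {k. P ^ k dvd A} = {1..pmult P A}"
      by (auto simp: power_dvd_iff_le_pmult[OF irr[OF P] A])
    then show "(\<Sum>k\<in>{1..n}. if P ^ k dvd A then degree P else 0) = pmult P A * degree P"
      by (simp add: sum.If_cases)
  qed
  also have "\<dots> = degree A" using degree_smooth_eq_sum_pmult[OF assms(1)] by simp
  finally show ?thesis ..
qed

lemma card_monics_of_degree_dvd:
  fixes D :: "'a::{field,finite} poly"
  assumes "monic D" "degree D \<le> n"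
  shows "card {A \<in> monics_of_degree n. D dvd A} = CARD('a) ^ (n - degree D)"
proof -
  have "{A \<in> monics_of_degree n. D dvd A} = (\<lambda>B. D * B) ` monics_of_degree (n - degree D)"
  proof (intro equalityI subsetI)
    fix A assume "A \<in> {A \<in> monics_of_degree n. D dvd A}"
    then obtain B where "A = D * B" "monic A" "degree A = n"
      by (auto simp: monics_of_degree_def)
    moreover have "monic B" using calculation assms(1) monic_mult_cancel_left by blast
    ultimately show "A \<in> (\<lambda>B. D * B) ` monics_of_degree (n - degree D)"
      using monic_nonzero[OF assms(1)] monic_nonzero[OF \<open>monic B\<close>]
      by (auto simp: monics_of_degree_def degree_mult_eq)
  next
    fix A assume "A \<in> (\<lambda>B. D * B) ` monics_of_degree (n - degree D)"
    then obtain B where "A = D * B" "monic B" "degree B = n - degree D"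
      by (auto simp: monics_of_degree_def)
    then show "A \<in> {A \<in> monics_of_degree n. D dvd A}"
      using assms monic_nonzero[OF assms(1)] monic_nonzero[OF \<open>monic B\<close>]
      by (auto simp: monics_of_degree_def degree_mult_eq monic_mult)
  qed
  moreover have "inj_on (\<lambda>B. D * B) (monics_of_degree (n - degree D))"
    using monic_nonzero[OF assms(1)] by (auto intro: inj_onI)
  ultimately show ?thesis by (simp add: card_image card_monics_of_degree)
qed

lemma card_monics_of_degree_power_dvd:
  fixes P :: "'a::{field,finite} poly"
  assumes "monic P"
  shows "card {A \<in> monics_of_degree n. P ^ k dvd A}
           = (if k * degree P \<le> n then CARD('a) ^ (n - k * degree P) else 0)"
proof (cases "k * degree P \<le> n")
  case True
  then show ?thesis using card_monics_of_degree_dvd[OF monic_power[OF assms], of k n]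
    by (simp add: degree_power_eq monic_nonzero[OF assms])
next
  case False
  have "\<not> P ^ k dvd A" if "A \<in> monics_of_degree n" for A
    using that False dvd_imp_degree_le[of "P ^ k" A] monic_nonzero[OF assms]
    by (auto simp: monics_of_degree_def degree_power_eq dest: monic_nonzero)
  then have empty: "{A \<in> monics_of_degree n. P ^ k dvd A} = {}" by blast
  show ?thesis using False by (simp only: empty) simp
qed

(* Double counting of the pairs (A, P^k) with A monic of degree n and P^k dividing A,
   each weighted by degree P. *)
lemma sum_prime_power_pairs:
  "(\<Sum>(P, k)\<in>prime_power_pairs n. degree (P :: 'a::{field,finite} poly) * CARD('a) ^ (n - k * degree P))
     = n * CARD('a) ^ n"
proof -
  let ?I = "irreducibles_upto n \<times> {1..n} :: ('a poly \<times> nat) set"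
  let ?M = "monics_of_degree n :: 'a poly set"
  have count: "(\<Sum>A\<in>?M. if P ^ k dvd A then degree P else 0)
      = (if (P, k) \<in> prime_power_pairs n then degree P * CARD('a) ^ (n - k * degree P) else 0)"
    if "(P, k) \<in> ?I" for P k
  proof -
    have P: "monic P" "irreducible P" "1 \<le> k" using that by (auto simp: irreducibles_upto_def)
    have "(\<Sum>A\<in>?M. if P ^ k dvd A then degree P else 0) = degree P * card {A \<in> ?M. P ^ k dvd A}"
      by (simp add: sum.If_cases[OF finite_monics_of_degree] Int_def conj_commute)
    then show ?thesis
      using P by (simp add: card_monics_of_degree_power_dvd prime_power_pairs_def)
  qed
  have "n * CARD('a) ^ n = (\<Sum>A\<in>?M. degree A)"
    by (simp add: monics_of_degree_def card_monics_of_degree[symmetric])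
  also have "\<dots> = (\<Sum>A\<in>?M. \<Sum>(P, k)\<in>?I. if P ^ k dvd A then degree P else 0)"
    by (intro sum.cong refl degree_eq_sum_prime_power_divisors)
      (auto simp: monics_of_degree_def intro: monic_imp_smooth)
  also have "\<dots> = (\<Sum>(P, k)\<in>?I. \<Sum>A\<in>?M. if P ^ k dvd A then degree P else 0)"
    by (subst sum.swap) (simp add: case_prod_unfold)
  also have "\<dots> = (\<Sum>(P, k)\<in>?I. if (P, k) \<in> prime_power_pairs n then degree P * CARD('a) ^ (n - k * degree P) else 0)"
    by (intro sum.cong refl) (auto simp: count)
  also have "\<dots> = (\<Sum>(P, k)\<in>prime_power_pairs n. degree (P :: 'a poly) * CARD('a) ^ (n - k * degree P))"
    using prime_power_pairs_subset[of n, where 'a = 'a] finite_irreducibles_upto[of n, where 'a = 'a]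
    by (simp add: sum.inter_restrict[symmetric] Int_absorb1 case_prod_unfold)
  finally show ?thesis ..
qed

(* Gauss's formula sum_{e | d} e pi(e) = q^d: the pairs (P, k) with k * degree P = d run over
   the monic irreducibles P whose degree divides d. *)
lemma sum_degree_prime_powers_of_degree:
  "(\<Sum>(P, k)\<in>{(P, k) \<in> prime_power_pairs (Suc m). k * degree P = Suc m}. degree (P :: 'a::{field,finite} poly))
     = CARD('a) ^ Suc m"
proof -
  let ?q = "CARD('a)"
  let ?g = "\<lambda>n (P :: 'a poly, k). degree P * ?q ^ (n - k * degree P)"
  define E :: "('a poly \<times> nat) set" where "E = {(P, k) \<in> prime_power_pairs (Suc m). k * degree P = Suc m}"
  have split: "prime_power_pairs (Suc m) = prime_power_pairs m \<union> E" "prime_power_pairs m \<inter> E = {}"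
    by (auto simp: prime_power_pairs_def E_def)
  have fin: "finite E" unfolding E_def by (rule finite_subset[OF _ finite_prime_power_pairs]) auto
  have shift: "?g (Suc m) x = ?q * ?g m x" if "x \<in> prime_power_pairs m" for x
    using that unfolding prime_power_pairs_def by clarify (simp add: Suc_diff_le)
  have "Suc m * ?q ^ Suc m = (\<Sum>x\<in>prime_power_pairs (Suc m). ?g (Suc m) x)"
    using sum_prime_power_pairs[of "Suc m", where 'a = 'a] by (simp add: case_prod_unfold)
  also have "\<dots> = (\<Sum>x\<in>prime_power_pairs m. ?g (Suc m) x) + (\<Sum>x\<in>E. ?g (Suc m) x)"
    unfolding split(1) by (rule sum.union_disjoint[OF finite_prime_power_pairs fin split(2)])
  also have "(\<Sum>x\<in>prime_power_pairs m. ?g (Suc m) x) = ?q * (\<Sum>x\<in>prime_power_pairs m. ?g m x)"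
    by (simp add: sum_distrib_left shift)
  also have "\<dots> = m * ?q ^ Suc m"
    using sum_prime_power_pairs[of m, where 'a = 'a] by (simp add: case_prod_unfold)
  also have "(\<Sum>x\<in>E. ?g (Suc m) x) = (\<Sum>(P, k)\<in>E. degree P)"
    by (intro sum.cong) (auto simp: E_def)
  finally show ?thesis by (simp add: E_def)
qed

lemma card_irreducibles_of_degree_le:
  assumes "0 < d"
  shows "d * card {P :: 'a::{field,finite} poly. monic P \<and> irreducible P \<and> degree P = d} \<le> CARD('a) ^ d"
proof -
  let ?Irr = "{P :: 'a poly. monic P \<and> irreducible P \<and> degree P = d}"
  let ?E = "{(P, k) \<in> prime_power_pairs d. k * degree P = d} :: ('a poly \<times> nat) set"
  have "d * card ?Irr = (\<Sum>(P, k)\<in>(\<lambda>P. (P, 1 :: nat)) ` ?Irr. degree (P :: 'a poly))"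
    by (simp add: sum.reindex inj_on_def)
  also have "\<dots> \<le> (\<Sum>(P, k)\<in>?E. degree P)"
    by (intro sum_mono2 finite_subset[OF _ finite_prime_power_pairs[of d]])
      (auto simp: prime_power_pairs_def)
  also have "\<dots> = CARD('a) ^ d"
    using sum_degree_prime_powers_of_degree[of "d - 1", where 'a = 'a] assms by simp
  finally show ?thesis .
qed

lemma two_le_card_field: "2 \<le> CARD('a::{field,finite})"
proof -
  have "card {0 :: 'a, 1} \<le> CARD('a)" by (rule card_mono) simp_all
  then show ?thesis by simp
qed

lemma sum_irreducibles_upto_le:
  fixes f :: "nat \<Rightarrow> real"
  assumes "\<And>d. 0 \<le> f d"
  shows "(\<Sum>P\<in>(irreducibles_upto X :: 'a::{field,finite} poly set). f (degree P))
           \<le> (\<Sum>d=1..X. real CARD('a) ^ d / real d * f d)"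
proof -
  let ?S = "irreducibles_upto X :: 'a poly set"
  let ?Irr = "\<lambda>d. {P :: 'a poly. monic P \<and> irreducible P \<and> degree P = d}"
  have "(\<Sum>P\<in>?S. f (degree P)) = (\<Sum>d=1..X. \<Sum>P\<in>{P \<in> ?S. degree P = d}. f (degree P))"
    by (rule sym, rule sum.group[OF finite_irreducibles_upto])
      (auto simp: irreducibles_upto_def Suc_le_eq dest: irreducible_degree_pos)
  also have "\<dots> = (\<Sum>d=1..X. real (card (?Irr d)) * f d)"
  proof (intro sum.cong refl)
    fix d assume "d \<in> {1..X}"
    then have "{P \<in> ?S. degree P = d} = ?Irr d"
      by (auto simp: irreducibles_upto_def)
    then show "(\<Sum>P\<in>{P \<in> ?S. degree P = d}. f (degree P)) = real (card (?Irr d)) * f d"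
      by simp
  qed
  also have "\<dots> \<le> (\<Sum>d=1..X. real CARD('a) ^ d / real d * f d)"
  proof (intro sum_mono mult_right_mono assms)
    fix d assume "d \<in> {1..X}"
    then have "real d * real (card (?Irr d)) \<le> real CARD('a) ^ d"
      using card_irreducibles_of_degree_le[of d, where 'a = 'a] by (simp flip: of_nat_mult of_nat_power)
    then show "real (card (?Irr d)) \<le> real CARD('a) ^ d / real d"
      using \<open>d \<in> {1..X}\<close> by (simp add: field_simps)
  qed
  finally show ?thesis .
qed

section \<open>Sums of inverse norms\<close>

lemma pnorm_pos: "0 < pnorm (A :: 'a::{field,finite} poly)"
  using two_le_card_field[where 'a = 'a] by (simp add: pnorm_def)

lemma pnorm_mult:
  fixes A B :: "'a::{field,finite} poly"
  assumes "A \<noteq> 0" "B \<noteq> 0"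
  shows "pnorm (A * B) = pnorm A * pnorm B"
  using assms by (simp add: pnorm_def degree_mult_eq power_add)

lemma pnorm_power: "A \<noteq> 0 \<Longrightarrow> pnorm (A ^ k) = pnorm (A :: 'a::{field,finite} poly) ^ k"
  by (simp add: pnorm_def degree_power_eq) (metis power_mult mult.commute)

lemma inverse_pnorm_irreducible_le:
  fixes P :: "'a::{field,finite} poly"
  assumes "irreducible P"
  shows "1 / pnorm P \<le> 1 / 2"
proof -
  have "2 \<le> real CARD('a) ^ 1" using two_le_card_field[where 'a = 'a] by simp
  also have "\<dots> \<le> pnorm P"
    unfolding pnorm_def using irreducible_degree_pos[OF assms] two_le_card_field[where 'a = 'a]
    by (intro power_increasing) auto
  finally show ?thesis by (simp add: divide_simps)
qed

lemma sum_inverse_pnorm_irreducibles_le: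
  "(\<Sum>P\<in>(irreducibles_upto X :: 'a::{field,finite} poly set). 1 / pnorm P) \<le> (\<Sum>d=1..X. 1 / real d)"
proof -
  have "(\<Sum>P\<in>(irreducibles_upto X :: 'a poly set). 1 / pnorm P)
      \<le> (\<Sum>d=1..X. real CARD('a) ^ d / real d * (1 / real CARD('a) ^ d))"
    unfolding pnorm_def by (rule sum_irreducibles_upto_le) simp
  also have "\<dots> = (\<Sum>d=1..X. 1 / real d)"
    using two_le_card_field[where 'a = 'a] by (intro sum.cong) simp_all
  finally show ?thesis .
qed

lemma sum_degree_div_pnorm_irreducibles_le:
  "(\<Sum>P\<in>(irreducibles_upto X :: 'a::{field,finite} poly set). real (degree P) / pnorm P) \<le> real X"
proof -
  have "(\<Sum>P\<in>(irreducibles_upto X :: 'a poly set). real (degree P) / pnorm P)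
      \<le> (\<Sum>d=1..X. real CARD('a) ^ d / real d * (real d / real CARD('a) ^ d))"
    unfolding pnorm_def by (rule sum_irreducibles_upto_le) simp
  also have "\<dots> = (\<Sum>d=1..X. 1)"
    using two_le_card_field[where 'a = 'a] by (intro sum.cong) simp_all
  finally show ?thesis by simp
qed

lemma sum_inverse_pnorm_sq_irreducibles_le:
  "(\<Sum>P\<in>(irreducibles_upto X :: 'a::{field,finite} poly set). (1 / pnorm P)\<^sup>2) \<le> 1"
proof -
  let ?q = "real CARD('a)"
  have "(\<Sum>P\<in>(irreducibles_upto X :: 'a poly set). (1 / pnorm P)\<^sup>2)
      \<le> (\<Sum>d=1..X. ?q ^ d / real d * (1 / ?q ^ d)\<^sup>2)"
    unfolding pnorm_def by (rule sum_irreducibles_upto_le) simp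
  also have "\<dots> \<le> (\<Sum>d=1..X. (1 / 2) ^ d)"
  proof (rule sum_mono)
    fix d assume "d \<in> {1..X}"
    have q: "0 < ?q" using two_le_card_field[where 'a = 'a] by simp
    have "?q ^ d / real d * (1 / ?q ^ d)\<^sup>2 = (1 / ?q ^ d) / real d"
      using q by (simp add: power2_eq_square)
    also have "\<dots> \<le> 1 / ?q ^ d"
      using \<open>d \<in> {1..X}\<close> q by (simp add: field_simps)
    also have "\<dots> \<le> (1 / 2) ^ d"
    proof -
      have "2 ^ d \<le> ?q ^ d" using two_le_card_field[where 'a = 'a] by (intro power_mono) auto
      then show ?thesis by (simp add: divide_simps)
    qed
    finally show "?q ^ d / real d * (1 / ?q ^ d)\<^sup>2 \<le> (1 / 2) ^ d" .
  qed
  also have "\<dots> = 1 - (1 / 2) ^ X"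
    by (induction X) (simp_all add: atLeastAtMostSuc_conv)
  also have "\<dots> \<le> 1" by simp
  finally show ?thesis .
qed

lemma pnorm_smooth:
  fixes A :: "'a::{field,finite} poly"
  assumes "smooth X A"
  shows "pnorm A = (\<Prod>P\<in>irreducibles_upto X. pnorm P ^ pmult P A)"
proof -
  have "pnorm A = real CARD('a) ^ (\<Sum>P\<in>irreducibles_upto X. degree P * pmult P A)"
    unfolding pnorm_def by (subst degree_smooth_eq_sum_pmult[OF assms]) (simp add: mult.commute)
  also have "\<dots> = (\<Prod>P\<in>irreducibles_upto X. pnorm P ^ pmult P A)"
    by (simp add: power_sum pnorm_def power_mult)
  finally show ?thesis .
qed

lemma sum_inverse_pnorm_smooth_upto_le_euler_product:
  "(\<Sum>A\<in>(smooth_upto X D :: 'a::{field,finite} poly set). 1 / pnorm A)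
     \<le> (\<Prod>P\<in>(irreducibles_upto X :: 'a poly set). \<Sum>k\<le>D. (1 / pnorm P) ^ k)"
proof -
  let ?S = "smooth_upto X D :: 'a poly set"
  let ?I = "irreducibles_upto X :: 'a poly set"
  let ?e = "\<lambda>A. restrict (\<lambda>P. pmult P A) ?I"
  let ?w = "\<lambda>g. \<Prod>P\<in>?I. (1 / pnorm P) ^ g P"
  have smooth: "smooth X A" if "A \<in> ?S" for A using that by (simp add: smooth_upto_def)
  have inj: "inj_on ?e ?S"
  proof (rule inj_onI)
    fix A B assume "A \<in> ?S" "B \<in> ?S" "?e A = ?e B"
    then have "(\<Prod>P\<in>?I. P ^ pmult P A) = (\<Prod>P\<in>?I. P ^ pmult P B)"
      by (intro prod.cong refl) (metis restrict_apply')
    then show "A = B" using smooth_eq_prod_pmult smooth \<open>A \<in> ?S\<close> \<open>B \<in> ?S\<close> by metis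
  qed
  have image: "?e ` ?S \<subseteq> PiE ?I (\<lambda>_. {..D})"
  proof (clarsimp simp: restrict_PiE_iff)
    fix A P assume "A \<in> ?S" "P \<in> ?I"
    then show "pmult P A \<le> D"
      using pmult_le_degree[of P A] monic_nonzero[of A]
      by (force simp: smooth_upto_def smooth_def irreducibles_upto_def)
  qed
  have "(\<Sum>A\<in>?S. 1 / pnorm A) = (\<Sum>A\<in>?S. ?w (?e A))"
    by (intro sum.cong refl) (simp add: pnorm_smooth[OF smooth] power_one_over prod_dividef)
  also have "\<dots> = (\<Sum>g\<in>?e ` ?S. ?w g)"
    by (simp add: sum.reindex[OF inj])
  also have "\<dots> \<le> (\<Sum>g\<in>PiE ?I (\<lambda>_. {..D}). ?w g)"
    by (rule sum_mono2[OF finite_PiE[OF finite_irreducibles_upto] image])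
      (auto intro!: prod_nonneg simp: pnorm_pos less_imp_le)
  also have "\<dots> = (\<Prod>P\<in>?I. \<Sum>k\<le>D. (1 / pnorm P) ^ k)"
    by (rule prod_sum_PiE[symmetric]) (simp_all add: finite_irreducibles_upto)
  finally show ?thesis .
qed

lemma geometric_sum_le:
  fixes x :: real
  assumes "0 \<le> x" "x \<le> 1 / 2"
  shows "(\<Sum>k\<le>D. x ^ k) \<le> 1 + x + 2 * x\<^sup>2"
proof -
  have "(1 - x) * (\<Sum>k\<le>D. x ^ k) = 1 - x ^ Suc D"
    using one_diff_power_eq[of x "Suc D"] by (simp only: lessThan_Suc_atMost)
  also have "\<dots> \<le> 1" by (simp add: assms(1))
  also have "\<dots> \<le> 1 + x\<^sup>2 * (1 - 2 * x)" using assms by simp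
  also have "\<dots> = (1 - x) * (1 + x + 2 * x\<^sup>2)" by (simp add: algebra_simps power2_eq_square)
  finally show ?thesis using assms by simp
qed

lemma exp_harmonic_le:
  assumes "1 \<le> X"
  shows "exp (\<Sum>d=1..X. 1 / real d) \<le> exp 1 * real X"
  using assms
proof (induction X rule: dec_induct)
  case (step n)
  have "exp (1 / real (Suc n)) \<le> real (Suc n) / real n"
  proof -
    have "real n / real (Suc n) = 1 + (- 1 / real (Suc n))" by (simp add: field_simps)
    also have "\<dots> \<le> exp (- 1 / real (Suc n))" by (rule exp_ge_add_one_self)
    finally show ?thesis using step.hyps by (simp add: exp_minus field_simps)
  qed
  have "exp (\<Sum>d=1..Suc n. 1 / real d) = exp (\<Sum>d=1..n. 1 / real d) * exp (1 / real (Suc n))"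
    by (simp add: exp_add)
  also have "\<dots> \<le> (exp 1 * real n) * (real (Suc n) / real n)"
    by (rule mult_mono[OF step.IH \<open>exp (1 / real (Suc n)) \<le> _\<close>]) simp_all
  also have "\<dots> = exp 1 * real (Suc n)" using step.hyps by simp
  finally show ?case .
qed simp

lemma sum_inverse_pnorm_smooth_upto_le:
  assumes "1 \<le> X"
  shows "(\<Sum>A\<in>(smooth_upto X D :: 'a::{field,finite} poly set). 1 / pnorm A) \<le> exp 3 * real X"
proof -
  let ?I = "irreducibles_upto X :: 'a poly set"
  let ?w = "\<lambda>P :: 'a poly. 1 / pnorm P"
  have w: "0 \<le> ?w P" "?w P \<le> 1 / 2" if "P \<in> ?I" for P
    using that pnorm_pos[of P] inverse_pnorm_irreducible_le[of P] by (simp_all add: irreducibles_upto_def)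
  have "(\<Sum>A\<in>(smooth_upto X D :: 'a poly set). 1 / pnorm A) \<le> (\<Prod>P\<in>?I. \<Sum>k\<le>D. ?w P ^ k)"
    by (rule sum_inverse_pnorm_smooth_upto_le_euler_product)
  also have "\<dots> \<le> (\<Prod>P\<in>?I. exp (?w P + 2 * (?w P)\<^sup>2))"
  proof (rule prod_mono)
    fix P assume "P \<in> ?I"
    then have "(\<Sum>k\<le>D. ?w P ^ k) \<le> 1 + (?w P + 2 * (?w P)\<^sup>2)"
      using geometric_sum_le[OF w[OF \<open>P \<in> ?I\<close>], of D] by (simp add: add.assoc)
    also have "\<dots> \<le> exp (?w P + 2 * (?w P)\<^sup>2)" by (rule exp_ge_add_one_self)
    finally show "0 \<le> (\<Sum>k\<le>D. ?w P ^ k) \<and> (\<Sum>k\<le>D. ?w P ^ k) \<le> exp (?w P + 2 * (?w P)\<^sup>2)"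
      using w[OF \<open>P \<in> ?I\<close>] by (auto intro: sum_nonneg)
  qed
  also have "\<dots> = exp ((\<Sum>P\<in>?I. ?w P) + 2 * (\<Sum>P\<in>?I. (?w P)\<^sup>2))"
    by (simp add: exp_sum[OF finite_irreducibles_upto, symmetric] sum.distrib sum_distrib_left)
  also have "\<dots> \<le> exp ((\<Sum>d=1..X. 1 / real d) + 2)"
    using sum_inverse_pnorm_irreducibles_le[of X, where 'a = 'a]
      sum_inverse_pnorm_sq_irreducibles_le[of X, where 'a = 'a] by simp
  also have "\<dots> \<le> exp 1 * real X * exp 2"
    using exp_harmonic_le[OF assms] by (simp add: exp_add)
  also have "\<dots> = exp 3 * real X" by (simp add: mult.commute flip: exp_add)
  finally show ?thesis .
qed

lemma sum_inverse_pnorm_multiples_le: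
  fixes Q :: "'a::{field,finite} poly"
  assumes "monic Q"
  shows "(\<Sum>S\<in>smooth_upto X D. if Q dvd S then 1 / pnorm S else 0)
           \<le> 1 / pnorm Q * (\<Sum>B\<in>(smooth_upto X D :: 'a poly set). 1 / pnorm B)"
proof -
  let ?S = "smooth_upto X D :: 'a poly set"
  have multiples: "{S \<in> ?S. Q dvd S} \<subseteq> (\<lambda>B. Q * B) ` ?S"
  proof
    fix S assume "S \<in> {S \<in> ?S. Q dvd S}"
    then obtain B where S: "S = Q * B" "smooth X S" "degree S \<le> D"
      by (auto simp: smooth_upto_def)
    then have "monic B" using assms monic_mult_cancel_left by (auto simp: smooth_def)
    have "smooth X B" using smooth_dvd[OF S(2) \<open>monic B\<close>] S(1) by simp
    moreover have "degree B \<le> degree S"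
      using S(1) monic_nonzero[OF assms] monic_nonzero[OF \<open>monic B\<close>] by (simp add: degree_mult_eq)
    ultimately show "S \<in> (\<lambda>B. Q * B) ` ?S" using S by (auto simp: smooth_upto_def)
  qed
  have "(\<Sum>S\<in>?S. if Q dvd S then 1 / pnorm S else 0) = (\<Sum>S\<in>{S \<in> ?S. Q dvd S}. 1 / pnorm S)"
    by (simp add: sum.inter_filter[OF finite_smooth_upto])
  also have "\<dots> \<le> (\<Sum>S\<in>(\<lambda>B. Q * B) ` ?S. 1 / pnorm S)"
    by (rule sum_mono2[OF finite_imageI[OF finite_smooth_upto] multiples])
      (simp add: pnorm_pos less_imp_le)
  also have "\<dots> = (\<Sum>B\<in>?S. 1 / pnorm (Q * B))"
    using monic_nonzero[OF assms] by (simp add: sum.reindex inj_on_def)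
  also have "\<dots> = 1 / pnorm Q * (\<Sum>B\<in>?S. 1 / pnorm B)"
    unfolding sum_distrib_left using monic_nonzero[OF assms]
    by (intro sum.cong refl) (auto simp: pnorm_mult smooth_upto_def smooth_def monic_nonzero)
  finally show ?thesis .
qed

lemma sum_degree_div_pnorm_smooth_upto_eq:
  "(\<Sum>S\<in>(smooth_upto X D :: 'a::{field,finite} poly set). real (degree S) / pnorm S)
     = (\<Sum>(P, k)\<in>(irreducibles_upto X :: 'a poly set) \<times> {1..D}.
          real (degree P) * (\<Sum>S\<in>smooth_upto X D. if P ^ k dvd S then 1 / pnorm S else 0))"
proof -
  let ?S = "smooth_upto X D :: 'a poly set"
  let ?I = "irreducibles_upto X :: 'a poly set"
  have "(\<Sum>S\<in>?S. real (degree S) / pnorm S)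
      = (\<Sum>S\<in>?S. \<Sum>(P, k)\<in>?I \<times> {1..D}. real (degree P) * (if P ^ k dvd S then 1 / pnorm S else 0))"
  proof (intro sum.cong refl)
    fix S assume "S \<in> ?S"
    then have "degree S = (\<Sum>(P, k)\<in>?I \<times> {1..D}. if P ^ k dvd S then degree P else 0)"
      by (intro degree_eq_sum_prime_power_divisors) (auto simp: smooth_upto_def)
    then have "real (degree S) / pnorm S
        = (\<Sum>(P, k)\<in>?I \<times> {1..D}. real (if P ^ k dvd S then degree P else 0) / pnorm S)"
      by (simp add: of_nat_sum sum_divide_distrib case_prod_unfold)
    also have "\<dots> = (\<Sum>(P, k)\<in>?I \<times> {1..D}. real (degree P) * (if P ^ k dvd S then 1 / pnorm S else 0))"
      by (intro sum.cong refl) auto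
    finally show "real (degree S) / pnorm S
        = (\<Sum>(P, k)\<in>?I \<times> {1..D}. real (degree P) * (if P ^ k dvd S then 1 / pnorm S else 0))" .
  qed
  also have "\<dots> = (\<Sum>(P, k)\<in>?I \<times> {1..D}. real (degree P) * (\<Sum>S\<in>?S. if P ^ k dvd S then 1 / pnorm S else 0))"
    by (subst sum.swap) (simp add: case_prod_unfold sum_distrib_left)
  finally show ?thesis .
qed

lemma geometric_sum_from_1_le:
  fixes x :: real
  assumes "0 \<le> x" "x \<le> 1 / 2"
  shows "(\<Sum>k=1..D. x ^ k) \<le> 2 * x"
proof -
  have "(\<Sum>k\<le>D. x ^ k) = 1 + (\<Sum>k=1..D. x ^ k)"
    by (simp add: atMost_atLeast0 sum.atLeast_Suc_atMost)
  moreover have "2 * x\<^sup>2 \<le> x"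
    using mult_right_mono[of "2 * x" 1 x] assms by (simp add: power2_eq_square)
  ultimately show ?thesis
    using geometric_sum_le[OF assms, of D] by linarith
qed

lemma sum_degree_div_pnorm_smooth_upto_le:
  "(\<Sum>S\<in>(smooth_upto X D :: 'a::{field,finite} poly set). real (degree S) / pnorm S)
     \<le> 2 * real X * (\<Sum>S\<in>(smooth_upto X D :: 'a poly set). 1 / pnorm S)"
proof -
  let ?S = "smooth_upto X D :: 'a poly set"
  let ?I = "irreducibles_upto X :: 'a poly set"
  let ?w = "\<lambda>P :: 'a poly. 1 / pnorm P"
  define Z where "Z = (\<Sum>S\<in>?S. 1 / pnorm S)"
  have Z: "0 \<le> Z" unfolding Z_def by (intro sum_nonneg) (simp add: pnorm_pos less_imp_le)
  have w: "0 \<le> ?w P" "?w P \<le> 1 / 2" if "P \<in> ?I" for P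
    using that pnorm_pos[of P] inverse_pnorm_irreducible_le[of P] by (simp_all add: irreducibles_upto_def)
  have "(\<Sum>S\<in>?S. real (degree S) / pnorm S)
      = (\<Sum>(P, k)\<in>?I \<times> {1..D}. real (degree P) * (\<Sum>S\<in>?S. if P ^ k dvd S then 1 / pnorm S else 0))"
    by (rule sum_degree_div_pnorm_smooth_upto_eq)
  also have "\<dots> \<le> (\<Sum>(P, k)\<in>?I \<times> {1..D}. real (degree P) * (?w P ^ k * Z))"
  proof (rule sum_mono, clarify)
    fix P k assume "P \<in> ?I"
    then have "monic P" "P \<noteq> 0" using monic_nonzero by (auto simp: irreducibles_upto_def)
    then have "(\<Sum>S\<in>?S. if P ^ k dvd S then 1 / pnorm S else 0) \<le> ?w P ^ k * Z"
      using sum_inverse_pnorm_multiples_le[OF monic_power[OF \<open>monic P\<close>], of k X D]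
      by (simp add: pnorm_power power_one_over Z_def)
    then show "real (degree P) * (\<Sum>S\<in>?S. if P ^ k dvd S then 1 / pnorm S else 0)
        \<le> real (degree P) * (?w P ^ k * Z)"
      by (rule mult_left_mono) simp
  qed
  also have "\<dots> = (\<Sum>P\<in>?I. \<Sum>k=1..D. real (degree P) * (?w P ^ k * Z))"
    by (rule sum.cartesian_product[symmetric])
  also have "\<dots> = Z * (\<Sum>P\<in>?I. real (degree P) * (\<Sum>k=1..D. ?w P ^ k))"
    unfolding sum_distrib_left by (intro sum.cong refl) (simp add: mult_ac)
  also have "\<dots> \<le> Z * (\<Sum>P\<in>?I. real (degree P) * (2 * ?w P))"
    by (intro mult_left_mono[OF sum_mono Z] mult_left_mono geometric_sum_from_1_le w) simp_all
  also have "\<dots> = 2 * Z * (\<Sum>P\<in>?I. real (degree P) / pnorm P)"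
    by (simp add: sum_distrib_left mult_ac)
  also have "\<dots> \<le> 2 * Z * real X"
    using sum_degree_div_pnorm_irreducibles_le[of X, where 'a = 'a] Z by (intro mult_left_mono) simp_all
  finally show ?thesis by (simp add: Z_def mult_ac)
qed

lemma sum_cube_weighted:
  fixes u v :: "'b \<Rightarrow> real"
  shows "(\<Sum>(a, b, c)\<in>A \<times> A \<times> A. u a * u b * u c * (v b + v c))
           = 2 * (sum u A)\<^sup>2 * (\<Sum>b\<in>A. u b * v b)"
proof -
  define Z where "Z = sum u A"
  define W where "W = (\<Sum>b\<in>A. u b * v b)"
  have pair: "(\<Sum>(b, c)\<in>A \<times> A. u b * u c * (v b + v c)) = 2 * Z * W"
  proof -
    have "(\<Sum>(b, c)\<in>A \<times> A. u b * u c * (v b + v c))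
        = (\<Sum>b\<in>A. \<Sum>c\<in>A. (u b * v b) * u c + u b * (u c * v c))"
      unfolding sum.cartesian_product[symmetric] by (intro sum.cong refl) (simp add: algebra_simps)
    also have "\<dots> = (\<Sum>b\<in>A. (u b * v b) * Z + u b * W)"
      by (simp add: sum.distrib sum_distrib_left Z_def W_def)
    also have "\<dots> = 2 * Z * W"
      by (simp add: sum.distrib flip: sum_distrib_right sum_distrib_left W_def Z_def)
    finally show ?thesis .
  qed
  have "(\<Sum>(a, b, c)\<in>A \<times> A \<times> A. u a * u b * u c * (v b + v c))
      = (\<Sum>a\<in>A. u a * (\<Sum>(b, c)\<in>A \<times> A. u b * u c * (v b + v c)))"
    unfolding sum.cartesian_product[symmetric] sum_distrib_left by (simp add: case_prod_unfold mult_ac)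
  also have "\<dots> = (\<Sum>a\<in>A. u a) * (2 * Z * W)"
    by (simp only: pair sum_distrib_right)
  also have "\<dots> = 2 * Z\<^sup>2 * W"
    by (simp add: Z_def power2_eq_square)
  finally show ?thesis by (simp add: Z_def W_def)
qed

lemma sum_smooth_triples_le:
  assumes "1 \<le> X"
  shows "(\<Sum>(H, S, T)\<in>smooth_upto X D \<times> smooth_upto X D \<times> smooth_upto X D.
            real (degree (S * T)) / pnorm (H * S * T :: 'a::{field,finite} poly)) \<le> 4 * exp 9 * real X ^ 4"
proof -
  let ?A = "smooth_upto X D :: 'a poly set"
  let ?w = "\<lambda>A :: 'a poly. 1 / pnorm A"
  define Z where "Z = (\<Sum>A\<in>?A. ?w A)"
  have nonzero: "A \<noteq> 0" if "A \<in> ?A" for A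
    using that monic_nonzero by (auto simp: smooth_upto_def smooth_def)
  have "(\<Sum>(H, S, T)\<in>?A \<times> ?A \<times> ?A. real (degree (S * T)) / pnorm (H * S * T))
      = (\<Sum>(H, S, T)\<in>?A \<times> ?A \<times> ?A. ?w H * ?w S * ?w T * (real (degree S) + real (degree T)))"
    by (intro sum.cong refl) (clarsimp simp: nonzero degree_mult_eq pnorm_mult)
  also have "\<dots> = 2 * Z\<^sup>2 * (\<Sum>S\<in>?A. real (degree S) / pnorm S)"
    unfolding sum_cube_weighted Z_def by simp
  also have "\<dots> \<le> 2 * Z\<^sup>2 * (2 * real X * Z)"
    using sum_degree_div_pnorm_smooth_upto_le[of X D, where 'a = 'a]
    by (intro mult_left_mono) (simp_all add: Z_def)
  also have "\<dots> = 4 * real X * Z ^ 3" by (simp add: power2_eq_square power3_eq_cube)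
  also have "\<dots> \<le> 4 * real X * (exp 3 * real X) ^ 3"
    using sum_inverse_pnorm_smooth_upto_le[OF assms, of D, where 'a = 'a]
    by (intro mult_left_mono power_mono) (simp_all add: Z_def sum_nonneg pnorm_pos less_imp_le)
  also have "\<dots> = 4 * exp 9 * real X ^ 4"
    by (simp add: power_mult_distrib flip: exp_of_nat_mult) (simp add: power4_eq_xxxx power3_eq_cube)
  finally show ?thesis .
qed

lemma smooth_factor_triples_subset:
  "{(H, S, T). monic H \<and> monic S \<and> monic T \<and> smooth X (H * S * T)
       \<and> degree (H * S) \<le> D \<and> degree (H * T) \<le> D}
     \<subseteq> smooth_upto X D \<times> smooth_upto X D \<times> (smooth_upto X D :: 'a::field poly set)"
proof
  fix x :: "'a poly \<times> 'a poly \<times> 'a poly"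
  assume "x \<in> {(H, S, T). monic H \<and> monic S \<and> monic T \<and> smooth X (H * S * T)
       \<and> degree (H * S) \<le> D \<and> degree (H * T) \<le> D}"
  then obtain H S T :: "'a poly" where x: "x = (H, S, T)" and H: "monic H" and S: "monic S"
    and T: "monic T" and HST: "smooth X (H * S * T)" and "degree (H * S) \<le> D" "degree (H * T) \<le> D"
    by auto
  have "H \<noteq> 0" "S \<noteq> 0" "T \<noteq> 0" using H S T monic_nonzero by auto
  then have "degree H + degree S \<le> D" "degree H + degree T \<le> D"
    using \<open>degree (H * S) \<le> D\<close> \<open>degree (H * T) \<le> D\<close> by (simp_all add: degree_mult_eq)
  moreover have "smooth X H" "smooth X S" "smooth X T"
    using smooth_dvd[OF HST] H S T by (auto simp: mult_ac)
  ultimately have "H \<in> smooth_upto X D" "S \<in> smooth_upto X D" "T \<in> smooth_upto X D"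
    by (simp_all add: smooth_upto_def)
  then show "x \<in> smooth_upto X D \<times> smooth_upto X D \<times> smooth_upto X D" by (simp add: x)
qed

lemma abs_alpha_m1_le: "\<bar>alpha_m1 X A\<bar> \<le> 1"
  unfolding alpha_m1_def abs_prod by (intro prod_le_1) (auto simp: alpha_pp_def)

lemma abs_alpha_m1_summand_le:
  fixes C :: "'a::{field,finite} poly"
  shows "\<bar>alpha_m1 X A * alpha_m1 X B / pnorm C * real n\<bar> \<le> real n / pnorm C"
proof -
  have "\<bar>alpha_m1 X A * alpha_m1 X B / pnorm C * real n\<bar> = \<bar>alpha_m1 X A\<bar> * \<bar>alpha_m1 X B\<bar> * (real n / pnorm C)"
    using pnorm_pos[of C] by (simp add: abs_mult)
  also have "\<dots> \<le> 1 * 1 * (real n / pnorm C)"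
    using pnorm_pos[of C] by (intro mult_right_mono mult_mono abs_alpha_m1_le) simp_all
  finally show ?thesis by simp
qed

theorem lemma6p2:
  fixes dummy :: "'a::{field,finite}"
  shows "\<exists>C X0. \<forall>X::nat. X \<ge> X0 \<longrightarrow> (\<forall>R::'a poly. monic R \<longrightarrow>
     \<bar>\<Sum>(H,S,T)\<in>{(H,S,T). monic H \<and> monic S \<and> monic T \<and> smooth X (H*S*T)
              \<and> coprime S T \<and> coprime (H*S*T) R
              \<and> real (degree (H*S)) \<le> real (degree R) / 10
              \<and> real (degree (H*T)) \<le> real (degree R) / 10}.
        alpha_m1 X (H*S) * alpha_m1 X (H*T) / pnorm (H*S*T) * real (degree (S*T))\<bar>
       \<le> C * real X ^ 4)"
proof (intro exI[of _ "4 * exp 9"] exI[of _ 1] allI impI)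
  fix X :: nat and R :: "'a poly"
  assume "1 \<le> X"
  let ?A = "smooth_upto X (degree R) :: 'a poly set"
  let ?T = "{(H,S,T). monic H \<and> monic S \<and> monic T \<and> smooth X (H*S*T)
              \<and> coprime S T \<and> coprime (H*S*T) R
              \<and> real (degree (H*S)) \<le> real (degree R) / 10
              \<and> real (degree (H*T)) \<le> real (degree R) / 10}"
  let ?f = "\<lambda>(H, S, T). alpha_m1 X (H*S) * alpha_m1 X (H*T) / pnorm (H*S*T) * real (degree (S*T))"
  let ?g = "\<lambda>(H, S, T). real (degree (S * T)) / pnorm (H * S * T)"
  have deg: "m \<le> n" if "real m \<le> real n / 10" for m n :: nat
    using that by linarith
  have index: "?T \<subseteq> ?A \<times> ?A \<times> ?A"
    by (rule order_trans[OF _ smooth_factor_triples_subset]) (auto intro: deg)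
  have "\<bar>sum ?f ?T\<bar> \<le> (\<Sum>x\<in>?T. \<bar>?f x\<bar>)" by (rule sum_abs)
  also have "\<dots> \<le> sum ?g ?T"
    by (intro sum_mono) (auto simp only: prod.case abs_alpha_m1_summand_le)
  also have "\<dots> \<le> sum ?g (?A \<times> ?A \<times> ?A)"
    by (rule sum_mono2[OF _ index]) (auto simp: finite_smooth_upto pnorm_pos less_imp_le)
  also have "\<dots> \<le> 4 * exp 9 * real X ^ 4" by (rule sum_smooth_triples_le[OF \<open>1 \<le> X\<close>])
  finally show "\<bar>sum ?f ?T\<bar> \<le> 4 * exp 9 * real X ^ 4" .
qed

end
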